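(* Let $b>0$, let $x_0$ be as in the context and $\bar x:=\frac{a+\rho c}{\rho+b}$. Then $\bar x<x_0$.
   Context: Constants: $a\in\mathbb{R}$, $b>0$, $\sigma>0$, $\rho>0$, $c>0$. $\psi(x)=e^{\frac{(bx-a)^2}{2\sigma^2 b}}D_{-\rho/b}\big(-\frac{bx-a}{\sigma b}\sqrt{2b}\big)$ with $D_\beta(x)=\frac{e^{-x^2/4}}{\Gamma(-\beta)}\int_0^\infty t^{-\beta-1}e^{-t^2/2-xt}dt$ ($\beta<0$); $\psi$ is the positive, strictly increasing, strictly convex fundamental solution of $\frac12\sigma^2u''+(a-bx)u'-\rho u=0$. $x_0$ is the unique solution on $(c,\infty)$ of $(x-c)\psi'(x)-\psi(x)=0$. *)

theory Defs
  imports "HOL-Analysis.Analysis"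
begin

text \<open>Parabolic cylinder function via its integral representation (for beta < 0).\<close>
definition parab_D :: "real \<Rightarrow> real \<Rightarrow> real" where
  "parab_D \<beta> x = exp (- x\<^sup>2 / 4) / Gamma (- \<beta>) *
     integral {0<..} (\<lambda>t. t powr (- \<beta> - 1) * exp (- t\<^sup>2 / 2 - x * t))"

text \<open>The increasing fundamental solution psi of
  (1/2) sigma^2 u'' + (a - b x) u' - rho u = 0.\<close>
definition psi :: "real \<Rightarrow> real \<Rightarrow> real \<Rightarrow> real \<Rightarrow> real \<Rightarrow> real" where
  "psi a b \<sigma> \<rho> x = exp ((b * x - a)\<^sup>2 / (2 * \<sigma>\<^sup>2 * b)) *
     parab_D (- \<rho> / b) (- ((b * x - a) / (\<sigma> * b)) * sqrt (2 * b))"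

end

(*
  Write I p s for the integral of t powr p * exp (- t^2/2 + s t) over (0, oo). Unfolding the
  integral representation of D gives psi x = I (v - 1) (k (b x - a)) / Gamma v with v = rho/b and
  k = sqrt (2 b) / (sigma b) > 0, and differentiating under the integral sign gives
  psi' x = k b I v (k (b x - a)) / Gamma v. Integrating the derivative of t powr v * exp (...)
  yields the recurrence v I (v - 1) s + s I v s = I (v + 1) s. At x0, with s = k (b x0 - a),
  the defining equation of x0 turns the left-hand side into k I v s ((rho + b) x0 - a - rho c),
  and since every I p s with p > -1 is positive, (rho + b) x0 > a + rho c.
*)
theory Submission
  imports Defs "HOL-Real_Asymp.Real_Asymp"
begin

definition gauss_moment :: "real \<Rightarrow> real \<Rightarrow> real" where
  "gauss_moment p s = integral {0<..} (\<lambda>t. t powr p * exp (- t\<^sup>2 / 2 + s * t))"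

lemma powr_div_exp_absolutely_integrable:
  fixes p :: real
  assumes "p > -1"
  shows "(\<lambda>t. t powr p / exp t) absolutely_integrable_on {0<..}"
proof -
  have "((\<lambda>t. t powr (p + 1 - 1) / exp t) has_integral Gamma (p + 1)) {0..}"
    by (rule Gamma_integral_real) (use assms in auto)
  then have "(\<lambda>t. t powr p / exp t) integrable_on {0..}"
    by (auto simp: integrable_on_def)
  then have "(\<lambda>t. t powr p / exp t) absolutely_integrable_on {0..}"
    by (rule nonnegative_absolutely_integrable_1) auto
  then show ?thesis
    by (rule set_integrable_subset) auto
qed

lemma gauss_moment_absolutely_integrable:
  fixes p s :: real
  assumes "p > -1"
  shows "(\<lambda>t. t powr p * exp (- t\<^sup>2 / 2 + s * t)) absolutely_integrable_on {0<..}"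
proof (rule measurable_bounded_by_integrable_imp_absolutely_integrable)
  show "(\<lambda>t. t powr p * exp (- t\<^sup>2 / 2 + s * t)) \<in> borel_measurable (lebesgue_on {0<..})"
    by (rule continuous_imp_measurable_on_sets_lebesgue) (auto intro!: continuous_intros)
  show "(\<lambda>t. exp ((s + 1)\<^sup>2 / 2) * (t powr p / exp t)) integrable_on {0<..}"
    using set_lebesgue_integral_eq_integral(1)[OF powr_div_exp_absolutely_integrable[OF assms]]
    by (rule integrable_on_mult_right)
  fix t :: real
  assume t: "t \<in> {0<..}"
  \<comment> \<open>completing the square: \<open>- t\<^sup>2 / 2 + s t = (s + 1)\<^sup>2 / 2 - t - (t - (s + 1))\<^sup>2 / 2\<close>\<close>
  have "- t\<^sup>2 / 2 + s * t \<le> (s + 1)\<^sup>2 / 2 - t"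
    using sum_power2_ge_zero[of "t - (s + 1)" 0] by (simp add: power2_eq_square algebra_simps)
  then have "exp (- t\<^sup>2 / 2 + s * t) \<le> exp ((s + 1)\<^sup>2 / 2) / exp t"
    by (simp flip: exp_diff)
  from mult_left_mono[OF this, of "t powr p"]
  show "norm (t powr p * exp (- t\<^sup>2 / 2 + s * t)) \<le> exp ((s + 1)\<^sup>2 / 2) * (t powr p / exp t)"
    using t by (simp add: abs_mult ac_simps)
qed simp

lemma gauss_moment_integrable:
  fixes p s :: real
  assumes "p > -1"
  shows "(\<lambda>t. t powr p * exp (- t\<^sup>2 / 2 + s * t)) integrable_on {0<..}"
  using set_lebesgue_integral_eq_integral(1)[OF gauss_moment_absolutely_integrable[OF assms]] .

lemma gauss_moment_pos:
  fixes p s :: real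
  assumes "p > -1"
  shows "0 < gauss_moment p s"
proof -
  let ?f = "\<lambda>t. t powr p * exp (- t\<^sup>2 / 2 + s * t)"
  have cont: "continuous_on {1..2} ?f"
    by (auto intro!: continuous_intros)
  have "0 = integral {1..2::real} (\<lambda>_. 0)"
    by simp
  also have "\<dots> < integral {1..2} ?f"
    by (rule integral_less_real) (auto intro!: continuous_intros cont)
  also have "\<dots> \<le> gauss_moment p s"
    unfolding gauss_moment_def
    using assms cont
    by (intro integral_subset_le integrable_continuous_interval gauss_moment_integrable) auto
  finally show ?thesis .
qed

lemma gauss_moment_taylor_remainder:
  fixes p s h :: real
  assumes p: "p > -1" and h: "\<bar>h\<bar> \<le> 1"
  shows "\<bar>gauss_moment p (s + h) - gauss_moment p s - h * gauss_moment (p + 1) s\<bar>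
    \<le> h\<^sup>2 * gauss_moment (p + 2) (s + 1)"
proof -
  define g where "g q r t = t powr q * exp (- t\<^sup>2 / 2 + r * t)" for q r t :: real
  define R where "R t = g p (s + h) t - g p s t - h * g (p + 1) s t" for t
  have int: "g q r integrable_on {0<..}" if "q > -1" for q r
    unfolding g_def using that by (rule gauss_moment_integrable)
  have R_int: "R integrable_on {0<..}"
    unfolding R_def using p by (intro integrable_diff integrable_on_mult_right int) auto
  have "gauss_moment p (s + h) - gauss_moment p s - h * gauss_moment (p + 1) s = integral {0<..} R"
    unfolding R_def gauss_moment_def g_def[symmetric] using p
    by (simp add: integral_diff integrable_diff integrable_on_mult_right int)
  also have "\<bar>\<dots>\<bar> \<le> integral {0<..} (\<lambda>t. h\<^sup>2 * g (p + 2) (s + 1) t)"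
  proof (rule integral_norm_bound_integral[OF R_int, unfolded real_norm_def])
    show "(\<lambda>t. h\<^sup>2 * g (p + 2) (s + 1) t) integrable_on {0<..}"
      using p by (intro integrable_on_mult_right int) auto
  next
    fix t :: real
    assume t: "t \<in> {0<..}"
    have "R t = g p s t * (exp (h * t) - 1 - h * t)"
      using t by (simp add: R_def g_def powr_add algebra_simps flip: exp_add)
    moreover have "\<bar>exp (h * t) - 1 - h * t\<bar> \<le> exp t * (h * t)\<^sup>2"
    proof -
      have "\<bar>exp (h * t) - 1 - h * t\<bar> \<le> exp \<bar>h * t\<bar> * (h * t)\<^sup>2"
        using Taylor_exp_field[of "h * t" 1] by (simp add: power2_eq_square diff_diff_eq)
      also have "\<dots> \<le> exp t * (h * t)\<^sup>2"
        using h t by (intro mult_right_mono) (auto simp: abs_mult mult_left_le_one_le)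
      finally show ?thesis .
    qed
    moreover have "g p s t * (exp t * (h * t)\<^sup>2) = h\<^sup>2 * g (p + 2) (s + 1) t"
      using t by (simp add: g_def powr_add power2_eq_square algebra_simps flip: exp_add)
    moreover have "g p s t \<ge> 0"
      by (simp add: g_def)
    ultimately show "\<bar>R t\<bar> \<le> h\<^sup>2 * g (p + 2) (s + 1) t"
      by (metis abs_mult mult_left_mono abs_of_nonneg)
  qed
  also have "\<dots> = h\<^sup>2 * gauss_moment (p + 2) (s + 1)"
    by (simp add: gauss_moment_def g_def)
  finally show ?thesis .
qed

lemma has_real_derivative_quadratic_remainder:
  fixes f :: "real \<Rightarrow> real"
  assumes d: "d > 0"
    and bound: "\<And>y. \<bar>y - x\<bar> < d \<Longrightarrow> \<bar>f y - f x - (y - x) * D\<bar> \<le> K * (y - x)\<^sup>2"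
  shows "(f has_real_derivative D) (at x)"
proof -
  have "((\<lambda>y. (f y - f x) / (y - x) - D) \<longlongrightarrow> 0) (at x)"
  proof (rule Lim_null_comparison)
    have "((\<lambda>y. K * \<bar>y - x\<bar>) \<longlongrightarrow> K * \<bar>x - x\<bar>) (at x)"
      by (intro tendsto_intros)
    then show "((\<lambda>y. K * \<bar>y - x\<bar>) \<longlongrightarrow> 0) (at x)"
      by simp
    have "norm ((f y - f x) / (y - x) - D) \<le> K * \<bar>y - x\<bar>" if "y \<noteq> x" "\<bar>y - x\<bar> < d" for y
    proof -
      have "(f y - f x) / (y - x) - D = (f y - f x - (y - x) * D) / (y - x)"
        using that by (simp add: field_simps)
      moreover have "\<bar>f y - f x - (y - x) * D\<bar> \<le> (K * \<bar>y - x\<bar>) * \<bar>y - x\<bar>"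
        using bound[OF that(2)] by (simp add: power2_eq_square)
      ultimately show ?thesis
        using that by (simp add: abs_divide divide_le_eq)
    qed
    then show "\<forall>\<^sub>F y in at x. norm ((f y - f x) / (y - x) - D) \<le> K * \<bar>y - x\<bar>"
      unfolding eventually_at using d by (auto simp: dist_real_def)
  qed
  then have "((\<lambda>y. (f y - f x) / (y - x)) \<longlongrightarrow> D) (at x)"
    by (rule LIM_zero_cancel)
  then show ?thesis
    by (simp add: has_field_derivative_iff)
qed

lemma gauss_moment_has_real_derivative:
  fixes p s :: real
  assumes "p > -1"
  shows "(gauss_moment p has_real_derivative gauss_moment (p + 1) s) (at s)"
proof (rule has_real_derivative_quadratic_remainder)
  fix y :: real
  assume "\<bar>y - s\<bar> < 1"
  then show "\<bar>gauss_moment p y - gauss_moment p s - (y - s) * gauss_moment (p + 1) s\<bar>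
      \<le> gauss_moment (p + 2) (s + 1) * (y - s)\<^sup>2"
    using gauss_moment_taylor_remainder[OF assms, of "y - s" s] by (simp add: mult.commute)
qed simp

lemma gauss_moment_recurrence:
  fixes v s :: real
  assumes v: "v > 0"
  shows "v * gauss_moment (v - 1) s + s * gauss_moment v s = gauss_moment (v + 1) s"
proof -
  define g where "g q t = t powr q * exp (- t\<^sup>2 / 2 + s * t)" for q t :: real
  define f where "f t = v * g (v - 1) t + s * g v t - g (v + 1) t" for t
  have abs_int: "g q absolutely_integrable_on {0<..}" if "q > -1" for q
    unfolding g_def using that by (rule gauss_moment_absolutely_integrable)
  have int: "g q integrable_on {0<..}" if "q > -1" for q
    using set_lebesgue_integral_eq_integral(1)[OF abs_int[OF that]] .
  have cont: "continuous_on {0<..} f"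
    unfolding f_def g_def by (auto intro!: continuous_intros)
  have "f absolutely_integrable_on {0<..}"
    unfolding f_def using v
    by (intro set_integral_diff(1) set_integral_add(1) set_integrable_mult_right abs_int) auto
  moreover have "(\<lambda>t. indicator {0<..} t *\<^sub>R f t) \<in> borel_measurable lborel"
    using borel_measurable_continuous_on_indicator[OF _ cont] by simp
  ultimately have f_int: "set_integrable lborel {0<..} f"
    unfolding set_integrable_def by (simp add: integrable_completion)
  \<comment> \<open>\<open>f\<close> is the derivative of \<open>g v\<close>, which vanishes at both ends of \<open>(0, \<infinity>)\<close>\<close>
  have deriv: "(g v has_vector_derivative f t) (at t)" if t: "0 < t" for t
  proof -
    have "(g v has_real_derivative v * t powr (v - 1) * exp (- t\<^sup>2 / 2 + s * t)
        + t powr v * (exp (- t\<^sup>2 / 2 + s * t) * (- (2 * t) / 2 + s))) (at t)"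
      unfolding g_def using t by (auto intro!: derivative_eq_intros)
    moreover have "v * t powr (v - 1) * exp (- t\<^sup>2 / 2 + s * t)
        + t powr v * (exp (- t\<^sup>2 / 2 + s * t) * (- (2 * t) / 2 + s)) = f t"
      using t by (simp add: f_def g_def powr_add algebra_simps)
    ultimately show ?thesis
      by (simp add: has_real_derivative_iff_has_vector_derivative)
  qed
  have "(LBINT t=0..\<infinity>. f t) = 0 - 0"
  proof (rule interval_integral_FTC_integrable)
    show "(g v has_vector_derivative f t) (at t)" if "0 < ereal t" "ereal t < \<infinity>" for t
      using that deriv by (simp add: zero_ereal_def)
    show "isCont f t" if "0 < ereal t" "ereal t < \<infinity>" for t
      using that cont by (simp add: zero_ereal_def continuous_on_eq_continuous_at)
    show "set_integrable lborel (einterval 0 \<infinity>) f"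
      using f_int by (simp add: zero_ereal_def)
    have "(g v \<longlongrightarrow> 0) (at_right 0)"
      unfolding g_def using v by real_asymp
    then show "((g v \<circ> real_of_ereal) \<longlongrightarrow> 0) (at_right 0)"
      by (simp add: zero_ereal_def ereal_tendsto_simps)
    have "(g v \<longlongrightarrow> 0) at_top"
      unfolding g_def using v by real_asymp
    then show "((g v \<circ> real_of_ereal) \<longlongrightarrow> 0) (at_left \<infinity>)"
      by (simp add: ereal_tendsto_simps)
  qed simp
  then have "(LINT t:{0<..}|lborel. f t) = 0"
    using interval_integral_to_infinity_eq[where M=lborel and a=0 and f=f]
    by (simp add: zero_ereal_def)
  then have "integral {0<..} f = 0"
    using set_borel_integral_eq_integral(2)[OF f_int] by simp
  moreover have "integral {0<..} f
      = v * gauss_moment (v - 1) s + s * gauss_moment v s - gauss_moment (v + 1) s"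
    unfolding f_def gauss_moment_def g_def[symmetric] using v
    by (simp add: integral_diff integral_add integrable_add integrable_on_mult_right int)
  ultimately show ?thesis
    by simp
qed

lemma psi_eq_gauss_moment:
  fixes a b \<sigma> \<rho> x :: real
  assumes "b > 0" "\<sigma> > 0"
  shows "psi a b \<sigma> \<rho> x
    = gauss_moment (\<rho> / b - 1) (sqrt (2 * b) / (\<sigma> * b) * (b * x - a)) / Gamma (\<rho> / b)"
proof -
  define z where "z = - ((b * x - a) / (\<sigma> * b)) * sqrt (2 * b)"
  have "z\<^sup>2 = ((b * x - a) * sqrt (2 * b) / (\<sigma> * b))\<^sup>2"
    by (simp add: z_def power2_eq_square)
  also have "\<dots> = ((b * x - a) / (\<sigma> * b))\<^sup>2 * (2 * b)"
    using assms by (simp add: power_divide power_mult_distrib)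
  also have "\<dots> = 4 * ((b * x - a)\<^sup>2 / (2 * \<sigma>\<^sup>2 * b))"
    using assms by (simp add: power_divide power_mult_distrib field_simps power2_eq_square)
  finally have "z\<^sup>2 / 4 = (b * x - a)\<^sup>2 / (2 * \<sigma>\<^sup>2 * b)"
    by simp
  then have gauss_factor: "exp ((b * x - a)\<^sup>2 / (2 * \<sigma>\<^sup>2 * b)) * exp (- z\<^sup>2 / 4) = 1"
    by (simp flip: exp_add)
  have "integral {0<..} (\<lambda>t. t powr (- (- \<rho> / b) - 1) * exp (- t\<^sup>2 / 2 - z * t))
      = gauss_moment (\<rho> / b - 1) (sqrt (2 * b) / (\<sigma> * b) * (b * x - a))"
    unfolding gauss_moment_def by (rule integral_cong) (simp add: z_def algebra_simps)
  then show ?thesis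
    unfolding psi_def parab_D_def z_def[symmetric] using gauss_factor
    by (simp add: field_simps)
qed

lemma psi_has_real_derivative:
  fixes a b \<sigma> \<rho> x :: real
  assumes "b > 0" "\<sigma> > 0" "\<rho> > 0"
  defines "k \<equiv> sqrt (2 * b) / (\<sigma> * b)"
  shows "(psi a b \<sigma> \<rho> has_real_derivative
    k * b * gauss_moment (\<rho> / b) (k * (b * x - a)) / Gamma (\<rho> / b)) (at x)"
proof -
  have "\<rho> / b - 1 > -1"
    using assms by simp
  from gauss_moment_has_real_derivative[OF this, of "k * (b * x - a)"]
  have outer: "(gauss_moment (\<rho> / b - 1) has_real_derivative gauss_moment (\<rho> / b) (k * (b * x - a)))
      (at (k * (b * x - a)))"
    by simp
  have inner: "((\<lambda>x. k * (b * x - a)) has_real_derivative k * b) (at x)"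
    by (auto intro!: derivative_eq_intros)
  from DERIV_chain2[OF outer inner]
  have "((\<lambda>x. gauss_moment (\<rho> / b - 1) (k * (b * x - a))) has_real_derivative
      gauss_moment (\<rho> / b) (k * (b * x - a)) * (k * b)) (at x)"
    by (auto intro!: derivative_eq_intros)
  from DERIV_cdivide[OF this, of "Gamma (\<rho> / b)"]
  have "((\<lambda>x. gauss_moment (\<rho> / b - 1) (k * (b * x - a)) / Gamma (\<rho> / b)) has_real_derivative
      k * b * gauss_moment (\<rho> / b) (k * (b * x - a)) / Gamma (\<rho> / b)) (at x)"
    by (simp add: ac_simps)
  moreover have "psi a b \<sigma> \<rho> = (\<lambda>x. gauss_moment (\<rho> / b - 1) (k * (b * x - a)) / Gamma (\<rho> / b))"
    using psi_eq_gauss_moment[OF assms(1,2)] unfolding k_def by auto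
  ultimately show ?thesis
    by simp
qed

theorem lemmaB1:
  fixes a b \<sigma> \<rho> c x\<^sub>0 :: real
  assumes "b > 0" and "\<sigma> > 0" and "\<rho> > 0" and "c > 0"
    and "x\<^sub>0 > c"
    and "(x\<^sub>0 - c) * deriv (psi a b \<sigma> \<rho>) x\<^sub>0 - psi a b \<sigma> \<rho> x\<^sub>0 = 0"
  shows "(a + \<rho> * c) / (\<rho> + b) < x\<^sub>0"
proof -
  define v where "v = \<rho> / b"
  define k where "k = sqrt (2 * b) / (\<sigma> * b)"
  define s where "s = k * (b * x\<^sub>0 - a)"
  have v: "v > 0" and k: "k > 0" and Gamma_pos: "Gamma v > 0"
    using assms by (simp_all add: v_def k_def Gamma_real_pos)
  have "deriv (psi a b \<sigma> \<rho>) x\<^sub>0 = k * b * gauss_moment v s / Gamma v"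
    using psi_has_real_derivative[OF assms(1-3)] unfolding v_def k_def s_def
    by (rule DERIV_imp_deriv)
  moreover have "psi a b \<sigma> \<rho> x\<^sub>0 = gauss_moment (v - 1) s / Gamma v"
    using psi_eq_gauss_moment[OF assms(1,2)] unfolding v_def k_def s_def by simp
  ultimately have "(x\<^sub>0 - c) * k * b * gauss_moment v s / Gamma v = gauss_moment (v - 1) s / Gamma v"
    using assms(6) by (simp add: ac_simps)
  then have x\<^sub>0_eq: "(x\<^sub>0 - c) * k * b * gauss_moment v s = gauss_moment (v - 1) s"
    using Gamma_pos by (simp add: divide_cancel_right)
  have "k * gauss_moment v s * ((\<rho> + b) * x\<^sub>0 - (a + \<rho> * c))
      = v * ((x\<^sub>0 - c) * k * b * gauss_moment v s) + s * gauss_moment v s"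
    using assms(1) by (simp add: v_def s_def algebra_simps)
  also have "\<dots> = gauss_moment (v + 1) s"
    unfolding x\<^sub>0_eq by (rule gauss_moment_recurrence[OF v])
  finally have "k * gauss_moment v s * ((\<rho> + b) * x\<^sub>0 - (a + \<rho> * c)) > 0"
    using gauss_moment_pos[of "v + 1" s] v by simp
  moreover have "k * gauss_moment v s > 0"
    using k gauss_moment_pos[of v s] v by simp
  ultimately have "(\<rho> + b) * x\<^sub>0 - (a + \<rho> * c) > 0"
    by (rule zero_less_mult_pos)
  then show ?thesis
    using assms(1,3) by (simp add: pos_divide_less_eq algebra_simps)
qed

end
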